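(* Let $0<k_{\max}<\infty$ and $I=[-k_{\max},k_{\max}]$. Then $$\sup_{\psi\in L^2(I),\ \|\psi\|=1}\ \sup_{x\in\mathbb R}|(\mathcal F\psi)(x)|^2=\frac{k_{\max}}{\pi},$$ so the minimal length in terms of min-entropy is $$\Gamma^\infty_{\min}:=\inf_{\psi\in L^2(I),\|\psi\|=1}\Big[-\log\big(\operatorname{ess\,sup}_x|(\mathcal F\psi)(x)|^2\big)\Big]=-\log\frac{k_{\max}}{\pi}.$$ In particular, if the variance-based minimal length is normalised, $\pi^2/(4k_{\max}^2)=1$, then $\Gamma^\infty_{\min}=\log2$ (one bit).
   Context: $(\mathcal F\psi)(x)=\frac1{\sqrt{2\pi}}\int_Ie^{ikx}\psi(k)\,dk$; $\log$ is the natural logarithm. The min-entropy of a probability density $w$ is $h_\infty(w)=-\log(\operatorname{ess\,sup}_x w(x))$. In the standard model of a modified algebra, $k_{\max}=\int_0^\infty dp/f(p)$ is the momentum cut-off and states are elements of $L^2(I)$ in the unmodified-momentum representation. *)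

theory Defs
  imports "HOL-Analysis.Analysis" "HOL-Probability.Essential_Supremum"
begin

definition Iint :: "real \<Rightarrow> real set" where
  "Iint kmax = {-kmax..kmax}"

text \<open>Normalised states in L2(I), represented by measurable square-integrable
  functions (values outside I are irrelevant).\<close>
definition states :: "real \<Rightarrow> (real \<Rightarrow> complex) set" where
  "states kmax = {\<psi>. \<psi> \<in> borel_measurable lborel
      \<and> set_integrable lborel (Iint kmax) (\<lambda>k. (cmod (\<psi> k))\<^sup>2)
      \<and> (LINT k:Iint kmax|lborel. (cmod (\<psi> k))\<^sup>2) = 1}"

definition fourierI :: "real \<Rightarrow> (real \<Rightarrow> complex) \<Rightarrow> real \<Rightarrow> complex" where
  "fourierI kmax \<psi> x = complex_of_real (1 / sqrt (2 * pi)) *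
      (LINT k:Iint kmax|lborel. exp (\<i> * complex_of_real (k * x)) * \<psi> k)"

definition min_entropy :: "(real \<Rightarrow> real) \<Rightarrow> ereal" where
  "min_entropy w = (let s = esssup lborel (\<lambda>x. ereal (w x)) in
      if s = \<infinity> then -\<infinity> else if s \<le> 0 then \<infinity> else ereal (- ln (real_of_ereal s)))"

end

theory Submission
  imports Defs
begin

text \<open>
  Bounding the integrand of the Fourier transform by \<open>|\<psi>|\<close> and using Cauchy--Schwarz on \<open>I\<close>
  (in its AM-GM form) gives \<open>|F\<psi>(x)| \<le> (2\<pi>)\<^sup>-\<^sup>1\<^sup>/\<^sup>2 \<surd>(2 kmax)\<close>, i.e.
  \<open>|F\<psi>(x)|\<^sup>2 \<le> kmax/\<pi>\<close> for every normalised \<open>\<psi>\<close> and every \<open>x\<close>; hence the essential supremum is at most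
  \<open>kmax/\<pi>\<close> and the min-entropy at least \<open>-log (kmax/\<pi>)\<close>. The constant state \<open>(2 kmax)\<^sup>-\<^sup>1\<^sup>/\<^sup>2\<close>
  is extremal: from \<open>cos t \<ge> 1 - |t|\<close> its transform satisfies
  \<open>|F\<psi>(x)|\<^sup>2 \<ge> (kmax/\<pi>) (1 - kmax |x|)\<^sup>2\<close>, so the bound is attained at \<open>x = 0\<close> and, since the lower
  bound is continuous, also as an essential supremum.
\<close>

lemma set_integrable_const:
  fixes c :: "'b::{banach, second_countable_topology}"
  assumes "A \<in> sets M" "emeasure M A \<noteq> \<infinity>"
  shows "set_integrable M A (\<lambda>_. c)"
  using assms unfolding set_integrable_def
  by (intro integrable_scaleR_left integrable_real_indicator) (auto simp: less_top)

lemma set_integrable_if_square_integrable: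
  fixes f :: "'a \<Rightarrow> 'b::{banach, second_countable_topology}"
  assumes "A \<in> sets M" "emeasure M A \<noteq> \<infinity>" "set_borel_measurable M A f"
    and "set_integrable M A (\<lambda>x. (norm (f x))\<^sup>2)"
  shows "set_integrable M A f"
proof (rule set_integrable_bound[OF _ assms(3)])
  show "set_integrable M A (\<lambda>x. ((norm (f x))\<^sup>2 + 1) / 2)"
    using assms(4) set_integrable_const[OF assms(1,2)]
    by (intro set_integrable_divide set_integral_add(1))
  have "norm (f x) \<le> ((norm (f x))\<^sup>2 + 1) / 2" for x
    using zero_le_power2[of "norm (f x) - 1"] by (simp add: power2_diff)
  then show "AE x in M. x \<in> A \<longrightarrow> norm (f x) \<le> norm (((norm (f x))\<^sup>2 + 1) / 2)"
    by (auto intro!: AE_I2 simp del: power2_abs)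
qed

lemma set_integral_norm_le_sqrt_measure:
  fixes f :: "'a \<Rightarrow> 'b::{banach, second_countable_topology}"
  assumes A: "A \<in> sets M" "emeasure M A \<noteq> \<infinity>" "0 < measure M A"
    and f: "set_borel_measurable M A f" "set_integrable M A (\<lambda>x. (norm (f x))\<^sup>2)"
    and normalised: "(LINT x:A|M. (norm (f x))\<^sup>2) = 1"
  shows "(LINT x:A|M. norm (f x)) \<le> sqrt (measure M A)"
proof -
  define a where "a = sqrt (measure M A)"
  have a: "0 < a" "a * a = measure M A"
    using A(3) by (simp_all add: a_def)
  note one = set_integrable_const[OF A(1,2), of "1::real"]
  have majorant: "set_integrable M A (\<lambda>x. (a * (norm (f x))\<^sup>2 + 1 / a) / 2)"
    using f(2) one by (intro set_integrable_divide set_integral_add(1) set_integrable_mult_right)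
  \<comment> \<open>AM-GM with weight \<open>a\<close>, chosen so that the two terms balance after integration\<close>
  have "norm (f x) \<le> (a * (norm (f x))\<^sup>2 + 1 / a) / 2" for x
  proof -
    have "2 * a * norm (f x) \<le> a * (a * (norm (f x))\<^sup>2) + 1"
      using zero_le_power2[of "a * norm (f x) - 1"] by (simp add: power2_eq_square algebra_simps)
    then show ?thesis
      using a(1) by (simp add: field_simps power2_eq_square)
  qed
  then have "(LINT x:A|M. norm (f x)) \<le> (LINT x:A|M. (a * (norm (f x))\<^sup>2 + 1 / a) / 2)"
    using set_integrable_norm[OF set_integrable_if_square_integrable[OF A(1,2) f]] majorant
    by (intro set_integral_mono)
  also have "\<dots> = (a + measure M A / a) / 2"
    using f(2) one normalised A(1,2)
    by (simp add: set_integral_add set_integral_const)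
  also have "\<dots> = a"
    using a by (simp add: field_simps)
  finally show ?thesis
    by (simp add: a_def)
qed

lemma set_integrable_Re:
  assumes "set_integrable M A f"
  shows "set_integrable M A (\<lambda>x. Re (f x))"
  using integrable_Re[OF assms[unfolded set_integrable_def]]
  by (simp add: set_integrable_def scaleR_conv_of_real)

lemma set_integral_Re:
  assumes "set_integrable M A f"
  shows "Re (LINT x:A|M. f x) = (LINT x:A|M. Re (f x))"
  using assms unfolding set_integrable_def set_lebesgue_integral_def
  by (subst integral_Re[symmetric]) (simp_all add: scaleR_conv_of_real)

lemma cos_ge_one_minus_abs: "1 - \<bar>t\<bar> \<le> cos (t::real)"
proof -
  have "(sin (t/2))\<^sup>2 = \<bar>sin (t/2)\<bar> * \<bar>sin (t/2)\<bar>"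
    by (simp add: power2_eq_square)
  also have "\<dots> \<le> \<bar>sin (t/2)\<bar>"
    by (rule mult_left_le[OF abs_sin_le_one abs_ge_zero])
  also have "\<dots> \<le> \<bar>t/2\<bar>"
    by (rule abs_sin_x_le_abs_x)
  finally show ?thesis
    using cos_double_sin[of "t/2"] by simp
qed

lemma le_esssup_lborel_if_eventually_greater:
  fixes w :: "real \<Rightarrow> ereal"
  assumes "\<And>t. t < c \<Longrightarrow> eventually (\<lambda>x. t < w x) (at x0)"
  shows "c \<le> esssup lborel w"
proof (rule ccontr)
  assume "\<not> c \<le> esssup lborel w"
  then have "esssup lborel w < c"
    by (simp add: not_le)
  then obtain t where t: "esssup lborel w < t" "t < c"
    using dense by blast
  obtain d where d: "0 < d" "\<And>x. x \<noteq> x0 \<Longrightarrow> dist x x0 < d \<Longrightarrow> t < w x"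
    using assms[OF t(2)] unfolding eventually_at by blast
  have "AE x in lborel. x \<notin> {x0<..<x0 + d}"
    using esssup_AE[of w lborel]
  proof eventually_elim
    case (elim x)
    show ?case
    proof
      assume "x \<in> {x0<..<x0 + d}"
      then have "t < w x"
        by (intro d(2)) (auto simp: dist_real_def)
      with elim t(1) show False
        by simp
    qed
  qed
  then have "emeasure lborel {x0<..<x0 + d} = 0"
    by (subst (asm) AE_iff_measurable[of "{x0<..<x0 + d}"]) auto
  then show False
    using d(1) by simp
qed

lemma min_entropy_ge_if_esssup_le:
  assumes "esssup lborel (\<lambda>x. ereal (w x)) \<le> ereal c" "0 < c"
  shows "ereal (- ln c) \<le> min_entropy w"
proof (cases "esssup lborel (\<lambda>x. ereal (w x)) \<le> 0")
  case False
  with assms(1) obtain s where s: "esssup lborel (\<lambda>x. ereal (w x)) = ereal s" "0 < s" "s \<le> c"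
    by (cases "esssup lborel (\<lambda>x. ereal (w x))") auto
  then show ?thesis
    by (simp add: min_entropy_def)
qed (auto simp: min_entropy_def Let_def)

lemma min_entropy_eq_if_esssup_eq:
  assumes "esssup lborel (\<lambda>x. ereal (w x)) = ereal c" "0 < c"
  shows "min_entropy w = ereal (- ln c)"
  using assms by (simp add: min_entropy_def)

lemma Iint_in_sets [measurable]: "Iint K \<in> sets lborel"
  by (simp add: Iint_def)

lemma emeasure_Iint_finite: "emeasure lborel (Iint K) \<noteq> \<infinity>"
  by (simp add: Iint_def emeasure_lborel_Icc_eq)

lemma measure_Iint: "0 \<le> K \<Longrightarrow> measure lborel (Iint K) = 2 * K"
  by (simp add: Iint_def)

lemma norm_fourierI_sq_le:
  assumes K: "0 < K" and \<psi>: "\<psi> \<in> states K"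
  shows "(cmod (fourierI K \<psi> x))\<^sup>2 \<le> K / pi"
proof -
  have [measurable]: "\<psi> \<in> borel_measurable lborel"
    and sq: "set_integrable lborel (Iint K) (\<lambda>k. (cmod (\<psi> k))\<^sup>2)"
    and normalised: "(LINT k:Iint K|lborel. (cmod (\<psi> k))\<^sup>2) = 1"
    using \<psi> by (auto simp: states_def)
  have meas: "set_borel_measurable lborel (Iint K) \<psi>"
    unfolding set_borel_measurable_def by measurable
  have "set_integrable lborel (Iint K) (\<lambda>k. exp (\<i> * complex_of_real (k * x)) * \<psi> k)"
    using set_integrable_if_square_integrable[OF Iint_in_sets emeasure_Iint_finite meas sq]
    by (rule set_integrable_bound) (auto simp: set_borel_measurable_def norm_mult)
  then have "cmod (LINT k:Iint K|lborel. exp (\<i> * complex_of_real (k * x)) * \<psi> k)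
      \<le> (LINT k:Iint K|lborel. cmod (\<psi> k))"
    using set_integral_norm_bound by (fastforce simp: norm_mult)
  also have "\<dots> \<le> sqrt (2 * K)"
    using set_integral_norm_le_sqrt_measure[OF Iint_in_sets emeasure_Iint_finite _ meas sq normalised] K
    by (simp add: measure_Iint)
  finally have "(cmod (fourierI K \<psi> x))\<^sup>2 \<le> (1 / sqrt (2 * pi) * sqrt (2 * K))\<^sup>2"
    unfolding fourierI_def norm_mult norm_of_real
    by (intro power_mono mult_left_mono) (auto intro: divide_right_mono simp del: of_real_mult)
  also have "\<dots> = K / pi"
    using K by (simp add: power_mult_distrib power_divide)
  finally show ?thesis .
qed

lemma esssup_norm_fourierI_sq_le:
  assumes "0 < K" "\<psi> \<in> states K"
  shows "esssup lborel (\<lambda>x. ereal ((cmod (fourierI K \<psi> x))\<^sup>2)) \<le> ereal (K / pi)"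
proof (rule esssup_I)
  have [measurable]: "\<psi> \<in> borel_measurable lborel"
    using assms(2) by (simp add: states_def)
  show "(\<lambda>x. ereal ((cmod (fourierI K \<psi> x))\<^sup>2)) \<in> borel_measurable lborel"
    unfolding fourierI_def set_lebesgue_integral_def Iint_def by measurable
  show "AE x in lborel. ereal ((cmod (fourierI K \<psi> x))\<^sup>2) \<le> ereal (K / pi)"
    using norm_fourierI_sq_le[OF assms] by simp
qed

definition flat_state :: "real \<Rightarrow> real \<Rightarrow> complex" where
  "flat_state K = (\<lambda>k. complex_of_real (1 / sqrt (2 * K)))"

lemma flat_state_in_states:
  assumes "0 < K"
  shows "flat_state K \<in> states K"
proof -
  have "(cmod (flat_state K k))\<^sup>2 = (1 / sqrt (2 * K))\<^sup>2" for k
    by (simp only: flat_state_def norm_of_real power2_abs)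
  then have norm_sq: "(cmod (flat_state K k))\<^sup>2 = 1 / (2 * K)" for k
    using assms by (simp add: power_divide)
  have "set_integrable lborel (Iint K) (\<lambda>k. (cmod (flat_state K k))\<^sup>2)"
    unfolding norm_sq by (rule set_integrable_const[OF Iint_in_sets emeasure_Iint_finite])
  moreover have "(LINT k:Iint K|lborel. (cmod (flat_state K k))\<^sup>2) = 1"
    using assms by (simp add: norm_sq set_integral_const[OF Iint_in_sets emeasure_Iint_finite] measure_Iint)
  moreover have "flat_state K \<in> borel_measurable lborel"
    by (simp add: flat_state_def)
  ultimately show ?thesis
    by (simp add: states_def)
qed

lemma norm_fourierI_flat_state_sq_ge:
  assumes K: "0 < K" and x: "K * \<bar>x\<bar> \<le> 1"
  shows "K / pi * (1 - K * \<bar>x\<bar>)\<^sup>2 \<le> (cmod (fourierI K (flat_state K) x))\<^sup>2"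
proof -
  define c where "c = 1 / sqrt (2 * K)"
  define J where "J = (LINT k:Iint K|lborel. exp (\<i> * complex_of_real (k * x)) * flat_state K k)"
  have c: "0 < c" "c\<^sup>2 = 1 / (2 * K)"
    using K by (simp_all add: c_def power_divide)
  have norm_integrand: "norm (exp (\<i> * complex_of_real (k * x)) * flat_state K k) = c" for k
    using c(1) by (simp only: norm_mult norm_exp_i_times flat_state_def norm_of_real) (simp add: c_def)
  have integrable:
    "set_integrable lborel (Iint K) (\<lambda>k. exp (\<i> * complex_of_real (k * x)) * flat_state K k)"
    using set_integrable_const[OF Iint_in_sets emeasure_Iint_finite, where c=c]
  proof (rule set_integrable_bound)
    show "set_borel_measurable lborel (Iint K) (\<lambda>k. exp (\<i> * complex_of_real (k * x)) * flat_state K k)"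
      unfolding set_borel_measurable_def flat_state_def by measurable
    show "AE k in lborel. k \<in> Iint K \<longrightarrow>
        norm (exp (\<i> * complex_of_real (k * x)) * flat_state K k) \<le> norm c"
      using norm_integrand c(1) by simp
  qed
  have "2 * K * ((1 - K * \<bar>x\<bar>) * c) = (LINT k:Iint K|lborel. (1 - K * \<bar>x\<bar>) * c)"
    using K by (simp add: set_integral_const[OF Iint_in_sets emeasure_Iint_finite] measure_Iint)
  also have "\<dots> \<le> (LINT k:Iint K|lborel. Re (exp (\<i> * complex_of_real (k * x)) * flat_state K k))"
  proof (rule set_integral_mono)
    show "set_integrable lborel (Iint K) (\<lambda>k. (1 - K * \<bar>x\<bar>) * c)"
      by (rule set_integrable_const[OF Iint_in_sets emeasure_Iint_finite])
    show "set_integrable lborel (Iint K) (\<lambda>k. Re (exp (\<i> * complex_of_real (k * x)) * flat_state K k))"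
      by (rule set_integrable_Re[OF integrable])
    fix k
    assume "k \<in> Iint K"
    then have "\<bar>k * x\<bar> \<le> K * \<bar>x\<bar>"
      by (auto simp: Iint_def abs_mult intro: mult_right_mono)
    then have "1 - K * \<bar>x\<bar> \<le> cos (k * x)"
      using cos_ge_one_minus_abs[of "k * x"] by linarith
    then show "(1 - K * \<bar>x\<bar>) * c \<le> Re (exp (\<i> * complex_of_real (k * x)) * flat_state K k)"
      using K by (simp add: flat_state_def c_def Re_exp divide_right_mono)
  qed
  also have "\<dots> = Re J"
    unfolding J_def by (rule set_integral_Re[OF integrable, symmetric])
  also have "\<dots> \<le> cmod J"
    by (rule complex_Re_le_cmod)
  finally have "(2 * K * ((1 - K * \<bar>x\<bar>) * c))\<^sup>2 \<le> (cmod J)\<^sup>2"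
    using K x c(1) by (intro power_mono) auto
  moreover have "(2 * K * ((1 - K * \<bar>x\<bar>) * c))\<^sup>2 = 2 * pi * (K / pi * (1 - K * \<bar>x\<bar>)\<^sup>2)"
  proof -
    have "(2 * K * ((1 - K * \<bar>x\<bar>) * c))\<^sup>2 = 4 * K\<^sup>2 * c\<^sup>2 * (1 - K * \<bar>x\<bar>)\<^sup>2"
      by (simp add: power_mult_distrib)
    also have "4 * K\<^sup>2 * c\<^sup>2 = 2 * pi * (K / pi)"
      using K c(2) by (simp add: power2_eq_square)
    finally show ?thesis
      by simp
  qed
  moreover have "(cmod (fourierI K (flat_state K) x))\<^sup>2 = (cmod J)\<^sup>2 / (2 * pi)"
    unfolding fourierI_def J_def norm_mult norm_of_real by (simp add: power_mult_distrib power_divide)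
  ultimately show ?thesis
    by (simp add: field_simps)
qed

lemma esssup_norm_fourierI_flat_state:
  assumes K: "0 < K"
  shows "esssup lborel (\<lambda>x. ereal ((cmod (fourierI K (flat_state K) x))\<^sup>2)) = ereal (K / pi)"
proof (rule antisym)
  show "esssup lborel (\<lambda>x. ereal ((cmod (fourierI K (flat_state K) x))\<^sup>2)) \<le> ereal (K / pi)"
    by (rule esssup_norm_fourierI_sq_le[OF K flat_state_in_states[OF K]])
  show "ereal (K / pi) \<le> esssup lborel (\<lambda>x. ereal ((cmod (fourierI K (flat_state K) x))\<^sup>2))"
  proof (rule le_esssup_lborel_if_eventually_greater)
    fix t
    assume t: "t < ereal (K / pi)"
    have "((\<lambda>x. ereal (K / pi * (1 - K * \<bar>x\<bar>)\<^sup>2)) \<longlongrightarrow> ereal (K / pi * (1 - K * \<bar>0\<bar>)\<^sup>2)) (at 0)"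
      by (intro tendsto_intros)
    then have "eventually (\<lambda>x. t < ereal (K / pi * (1 - K * \<bar>x\<bar>)\<^sup>2)) (at 0)"
      using t by (intro order_tendstoD(1)) auto
    moreover have "((\<lambda>x. K * \<bar>x\<bar>) \<longlongrightarrow> K * \<bar>0\<bar>) (at (0::real))"
      by (intro tendsto_intros)
    then have "eventually (\<lambda>x. K * \<bar>x\<bar> < 1) (at 0)"
      by (intro order_tendstoD(2)) auto
    ultimately show "eventually (\<lambda>x. t < ereal ((cmod (fourierI K (flat_state K) x))\<^sup>2)) (at 0)"
    proof eventually_elim
      case (elim x)
      then show ?case
        using norm_fourierI_flat_state_sq_ge[OF K, of x] by (auto intro: less_le_trans)
    qed
  qed
qed

lemma SUP_norm_fourierI_sq:
  assumes "0 < K"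
  shows "(SUP \<psi>\<in>states K. SUP x::real. ereal ((cmod (fourierI K \<psi> x))\<^sup>2)) = ereal (K / pi)"
proof (rule antisym)
  show "(SUP \<psi>\<in>states K. SUP x::real. ereal ((cmod (fourierI K \<psi> x))\<^sup>2)) \<le> ereal (K / pi)"
    by (intro SUP_least) (simp add: norm_fourierI_sq_le[OF assms])
  show "ereal (K / pi) \<le> (SUP \<psi>\<in>states K. SUP x::real. ereal ((cmod (fourierI K \<psi> x))\<^sup>2))"
    using norm_fourierI_flat_state_sq_ge[OF assms, of 0]
    by (intro SUP_upper2[OF flat_state_in_states[OF assms]] SUP_upper2[of 0]) auto
qed

lemma INF_min_entropy_fourierI:
  assumes "0 < K"
  shows "(INF \<psi>\<in>states K. min_entropy (\<lambda>x. (cmod (fourierI K \<psi> x))\<^sup>2)) = ereal (- ln (K / pi))"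
proof (rule antisym)
  show "(INF \<psi>\<in>states K. min_entropy (\<lambda>x. (cmod (fourierI K \<psi> x))\<^sup>2)) \<le> ereal (- ln (K / pi))"
    using min_entropy_eq_if_esssup_eq[OF esssup_norm_fourierI_flat_state[OF assms]] assms
    by (intro INF_lower2[OF flat_state_in_states[OF assms]]) auto
  show "ereal (- ln (K / pi)) \<le> (INF \<psi>\<in>states K. min_entropy (\<lambda>x. (cmod (fourierI K \<psi> x))\<^sup>2))"
    using assms by (intro INF_greatest min_entropy_ge_if_esssup_le esssup_norm_fourierI_sq_le) auto
qed

theorem mainTheorem9:
  fixes kmax :: real
  assumes "0 < kmax"
  shows "(SUP \<psi>\<in>states kmax. SUP x::real. ereal ((cmod (fourierI kmax \<psi> x))\<^sup>2))
           = ereal (kmax / pi)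
     \<and> (INF \<psi>\<in>states kmax. min_entropy (\<lambda>x. (cmod (fourierI kmax \<psi> x))\<^sup>2))
           = ereal (- ln (kmax / pi))
     \<and> (pi\<^sup>2 / (4 * kmax\<^sup>2) = 1 \<longrightarrow>
         (INF \<psi>\<in>states kmax. min_entropy (\<lambda>x. (cmod (fourierI kmax \<psi> x))\<^sup>2))
           = ereal (ln 2))"
proof -
  have "- ln (kmax / pi) = ln 2" if "pi\<^sup>2 / (4 * kmax\<^sup>2) = 1"
  proof -
    have "pi\<^sup>2 = (2 * kmax)\<^sup>2"
      using that assms by (simp add: field_simps power_mult_distrib)
    then have "pi = 2 * kmax"
      using assms by (subst (asm) power2_eq_iff_nonneg) auto
    then have half: "kmax / pi = 1 / 2"
      using assms by simp
    show ?thesis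
      unfolding half by (simp add: ln_div)
  qed
  then show ?thesis
    using SUP_norm_fourierI_sq[OF assms] INF_min_entropy_fourierI[OF assms] by simp
qed

end
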